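(* Let $H\subset Y$ be closed and $k\ge1$. Then $\mathcal R_n^f(H,Z,k)$ is open in $C(X,M)$ (with the source limitation topology) in each of the following cases: (i) $Z\subset M$ is closed and $X,Y$ are metric spaces; (ii) $Z=M$ and $X,Y$ are paracompact.
   Context: Let $(M,\rho)$ be a complete metric space, $Z\subset M$ closed, $n\ge0$, and $f\colon X\to Y$ a perfect surjection between paracompact spaces with $\dim f\le n$. For $H\subset Y$ and $k\ge1$, $\mathcal R_n^f(H,Z,k)$ is the set of $g\in C(X,M)$ such that for each $y\in H$ the set $g(f^{-1}(y))\cap Z$ can be covered by a family of open subsets of $M$ of mesh $\le1/k$ and order $\le n$ (every point of $M$ lies in at most $n+1$ members). The source limitation topology on $C(X,M)$ has as neighborhood base at $f$ the sets $\{g:\rho(g(x),f(x))<\varepsilon(x)\ \forall x\in X\}$, $\varepsilon\colon X\to(0,1]$ continuous. *)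

theory Defs
  imports "HOL-Analysis.Analysis"
begin

text \<open>Paracompact space (Engelking's convention: Hausdorff, and every open cover has a
  locally finite open refinement that still covers the space).\<close>
definition paracompact_space :: "'a topology \<Rightarrow> bool" where
  "paracompact_space X \<longleftrightarrow> Hausdorff_space X \<and>
     (\<forall>\<U>. (\<forall>U\<in>\<U>. openin X U) \<and> \<Union>\<U> = topspace X \<longrightarrow>
        (\<exists>\<V>. (\<forall>V\<in>\<V>. openin X V) \<and> \<Union>\<V> = topspace X \<and> locally_finite_in X \<V> \<and>
              (\<forall>V\<in>\<V>. \<exists>U\<in>\<U>. V \<subseteq> U)))"

definition order_le :: "'a set \<Rightarrow> 'a set set \<Rightarrow> nat \<Rightarrow> bool" where
  "order_le S \<V> n \<longleftrightarrow> (\<forall>p\<in>S. finite {V\<in>\<V>. p \<in> V} \<and> card {V\<in>\<V>. p \<in> V} \<le> n + 1)"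

definition covering_dim_le :: "'a topology \<Rightarrow> nat \<Rightarrow> bool" where
  "covering_dim_le X n \<longleftrightarrow>
     (\<forall>\<U>. finite \<U> \<and> (\<forall>U\<in>\<U>. openin X U) \<and> \<Union>\<U> = topspace X \<longrightarrow>
        (\<exists>\<V>. finite \<V> \<and> (\<forall>V\<in>\<V>. openin X V) \<and> \<Union>\<V> = topspace X \<and>
              (\<forall>V\<in>\<V>. \<exists>U\<in>\<U>. V \<subseteq> U) \<and> order_le (topspace X) \<V> n))"

definition map_dim_le :: "'a topology \<Rightarrow> 'b topology \<Rightarrow> ('a \<Rightarrow> 'b) \<Rightarrow> nat \<Rightarrow> bool" where
  "map_dim_le X Y f n \<longleftrightarrow>
     (\<forall>y\<in>topspace Y. covering_dim_le (subtopology X {x \<in> topspace X. f x = y}) n)"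

definition R_set :: "'a topology \<Rightarrow> ('a \<Rightarrow> 'b) \<Rightarrow> nat \<Rightarrow> 'b set \<Rightarrow> 'm::metric_space set
     \<Rightarrow> nat \<Rightarrow> ('a \<Rightarrow> 'm) set" where
  "R_set X f n H Z k =
     {g. continuous_map X euclidean g \<and>
         (\<forall>y\<in>H. \<exists>\<U>. (\<forall>U\<in>\<U>. open U) \<and>
              g ` {x \<in> topspace X. f x = y} \<inter> Z \<subseteq> \<Union>\<U> \<and>
              (\<forall>U\<in>\<U>. \<forall>a\<in>U. \<forall>b\<in>U. dist a b \<le> 1 / real k) \<and>
              order_le UNIV \<U> n)}"

text \<open>Openness in C(X,M) with respect to the source limitation topology.\<close>
definition sl_open :: "'a topology \<Rightarrow> ('a \<Rightarrow> 'm::metric_space) set \<Rightarrow> bool" where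
  "sl_open X \<G> \<longleftrightarrow> \<G> \<subseteq> {g. continuous_map X euclidean g} \<and>
     (\<forall>g\<in>\<G>. \<exists>\<epsilon>. continuous_map X euclidean \<epsilon> \<and> (\<forall>x\<in>topspace X. 0 < \<epsilon> x \<and> \<epsilon> x \<le> (1::real)) \<and>
        {h. continuous_map X euclidean h \<and> (\<forall>x\<in>topspace X. dist (h x) (g x) < \<epsilon> x)} \<subseteq> \<G>)"

end

theory Submission
  imports Defs
begin

(*
  Fix g in R_n^f(H,Z,k) and y in H, and let A = g(f^-1(y)), a compact set whose trace on Z
  is covered by an open family U of mesh <= 1/k and order <= n.  Since A is compact and Z is
  closed, some margin 2 delta_y > 0 keeps every point of Z that is 2 delta_y-close to A inside
  the union of U.  As f is a closed map, there is a neighbourhood G_y of y over which g stays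
  delta_y-close to A; hence every h that is delta_y-close to g over a point of G_y has its fibre
  trace there covered by the same family U.  Paracompactness of Y glues these local margins
  into one continuous function e : Y -> (0,1] lying below delta_y on some G_y around each point
  of H, and e o f is the radius of a source-limitation neighbourhood of g inside R_n^f(H,Z,k).

  Only paracompactness of Y, perfectness
  of f and closedness of Z and H are used, so both cases of the theorem follow at once.
*)

lemma paracompact_space_refinement:
  assumes "paracompact_space X" "\<And>U. U \<in> \<U> \<Longrightarrow> openin X U" "\<Union>\<U> = topspace X"
  obtains \<V> where "\<forall>V\<in>\<V>. openin X V" "\<Union>\<V> = topspace X" "locally_finite_in X \<V>"
    "\<forall>V\<in>\<V>. \<exists>U\<in>\<U>. V \<subseteq> U"
proof -
  have "(\<forall>U\<in>\<U>. openin X U) \<and> \<Union>\<U> = topspace X"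
    using assms(2,3) by blast
  then obtain \<V> where "\<forall>V\<in>\<V>. openin X V" "\<Union>\<V> = topspace X" "locally_finite_in X \<V>"
      "\<forall>V\<in>\<V>. \<exists>U\<in>\<U>. V \<subseteq> U"
    using assms(1) unfolding paracompact_space_def by auto
  then show ?thesis
    by (rule that)
qed

lemma paracompact_space_separation:
  assumes P: "paracompact_space X" and A: "closedin X A" and B: "closedin X B"
    and local_sep: "\<And>b. b \<in> B \<Longrightarrow> \<exists>U. openin X U \<and> b \<in> U \<and> disjnt A (X closure_of U)"
  obtains G where "openin X G" "B \<subseteq> G" "disjnt A (X closure_of G)"
proof -
  define \<U> where "\<U> = insert (topspace X - B) {U. openin X U \<and> disjnt A (X closure_of U)}"
  have U_open: "\<And>U. U \<in> \<U> \<Longrightarrow> openin X U"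
    using B by (auto simp: \<U>_def)
  have "topspace X \<subseteq> \<Union>\<U>"
    using local_sep unfolding \<U>_def by blast
  then have U_cover: "\<Union>\<U> = topspace X"
    using U_open openin_subset by blast
  obtain \<V> where V_open: "\<forall>V\<in>\<V>. openin X V" and V_cover: "\<Union>\<V> = topspace X"
    and lf: "locally_finite_in X \<V>" and refines: "\<forall>V\<in>\<V>. \<exists>U\<in>\<U>. V \<subseteq> U"
    by (rule paracompact_space_refinement[OF P U_open U_cover])
  define \<V>B where "\<V>B = {V\<in>\<V>. V \<inter> B \<noteq> {}}"
  have closure_disjoint: "disjnt A (X closure_of V)" if V: "V \<in> \<V>B" for V
  proof -
    obtain U where "U \<in> \<U>" "V \<subseteq> U"
      using refines V unfolding \<V>B_def by blast
    moreover have "U \<noteq> topspace X - B"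
      using V \<open>V \<subseteq> U\<close> unfolding \<V>B_def by blast
    ultimately have "disjnt A (X closure_of U)"
      unfolding \<U>_def by blast
    then show ?thesis
      using closure_of_mono[OF \<open>V \<subseteq> U\<close>] by (rule disjnt_subset2)
  qed
  have "X closure_of \<Union>\<V>B = (\<Union>V\<in>\<V>B. X closure_of V)"
    by (rule closure_of_locally_finite_Union, rule locally_finite_in_subset[OF lf])
       (auto simp: \<V>B_def)
  then have "disjnt A (X closure_of \<Union>\<V>B)"
    using closure_disjoint by (auto simp: disjnt_def)
  moreover have "B \<subseteq> \<Union>\<V>B"
    using V_cover closedin_subset[OF B] unfolding \<V>B_def by blast
  moreover have "openin X (\<Union>\<V>B)"
    using V_open unfolding \<V>B_def by blast
  ultimately show ?thesis
    using that by blast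
qed

lemma paracompact_imp_regular_space:
  assumes P: "paracompact_space X"
  shows "regular_space X"
  unfolding regular_space_def
proof clarify
  fix C a assume C: "closedin X C" and a: "a \<in> topspace X" "a \<notin> C"
  have Hs: "Hausdorff_space X"
    using P by (simp add: paracompact_space_def)
  have "\<exists>U. openin X U \<and> c \<in> U \<and> disjnt {a} (X closure_of U)" if "c \<in> C" for c
  proof -
    obtain U V where "openin X U" "openin X V" "c \<in> U" "a \<in> V" "disjnt U V"
      using Hs a C closedin_subset \<open>c \<in> C\<close> unfolding Hausdorff_space_def by (metis subsetD)
    then have "a \<notin> X closure_of U"
      unfolding in_closure_of disjnt_def by blast
    then show ?thesis
      using \<open>openin X U\<close> \<open>c \<in> U\<close> by auto
  qed
  then obtain G where G: "openin X G" "C \<subseteq> G" "disjnt {a} (X closure_of G)"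
    using paracompact_space_separation[OF P closedin_Hausdorff_singleton[OF Hs a(1)] C] by blast
  have "disjnt (topspace X - X closure_of G) G"
    using closure_of_subset[OF openin_subset[OF G(1)]] by (auto simp: disjnt_def)
  moreover have "a \<in> topspace X - X closure_of G"
    using a G(3) by (simp add: disjnt_def)
  ultimately show "\<exists>U V. openin X U \<and> openin X V \<and> a \<in> U \<and> C \<subseteq> V \<and> disjnt U V"
    using G(1,2) by (meson closedin_closure_of openin_diff openin_topspace)
qed

lemma paracompact_imp_normal_space:
  assumes P: "paracompact_space X"
  shows "normal_space X"
  unfolding normal_space
proof clarify
  fix S T assume S: "closedin X S" and T: "closedin X T" and "disjnt S T"
  have "\<exists>U. openin X U \<and> s \<in> U \<and> disjnt T (X closure_of U)" if "s \<in> S" for s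
    using paracompact_imp_regular_space[OF P] T that \<open>disjnt S T\<close> closedin_subset[OF S]
    unfolding regular_space disjnt_def by blast
  then show "\<exists>U. openin X U \<and> S \<subseteq> U \<and> disjnt T (X closure_of U)"
    using paracompact_space_separation[OF P T S] by metis
qed

lemma paracompact_closed_shrinking:
  assumes P: "paracompact_space X"
    and V_open: "\<And>V. V \<in> \<V> \<Longrightarrow> openin X V" and V_cover: "\<Union>\<V> = topspace X"
  obtains T where "\<forall>V. closedin X (T V) \<and> T V \<subseteq> V" "\<forall>x\<in>topspace X. \<exists>V\<in>\<V>. x \<in> T V"
proof -
  define \<N> where "\<N> = {N. openin X N \<and> (\<exists>V\<in>\<V>. X closure_of N \<subseteq> V)}"
  have N_open: "\<And>N. N \<in> \<N> \<Longrightarrow> openin X N"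
    by (simp add: \<N>_def)
  have "x \<in> \<Union>\<N>" if x: "x \<in> topspace X" for x
  proof -
    obtain V where V: "V \<in> \<V>" "x \<in> V"
      using x V_cover by blast
    have "closedin X (topspace X - V)"
      using V_open[OF V(1)] by (simp add: closedin_diff)
    moreover have "x \<in> topspace X - (topspace X - V)"
      using x V(2) by blast
    ultimately obtain N where N: "openin X N" "x \<in> N" "disjnt (topspace X - V) (X closure_of N)"
      using paracompact_imp_regular_space[OF P] unfolding regular_space by meson
    have "X closure_of N \<subseteq> V"
      using N(3) closure_of_subset_topspace[of X N] by (auto simp: disjnt_def)
    then have "N \<in> \<N>"
      using N(1) V(1) unfolding \<N>_def by blast
    then show ?thesis
      using N(2) by blast
  qed
  moreover have "\<Union>\<N> \<subseteq> topspace X"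
    using N_open openin_subset by (metis Union_least)
  ultimately have N_cover: "\<Union>\<N> = topspace X"
    by blast
  obtain \<W> where "\<forall>W\<in>\<W>. openin X W" and W_cover: "\<Union>\<W> = topspace X"
    and lf: "locally_finite_in X \<W>" and refines: "\<forall>W\<in>\<W>. \<exists>N\<in>\<N>. W \<subseteq> N"
    by (rule paracompact_space_refinement[OF P N_open N_cover])
  define T where "T V = X closure_of \<Union>{W\<in>\<W>. X closure_of W \<subseteq> V}" for V
  have "closedin X (T V)" for V
    by (simp add: T_def)
  moreover have "T V \<subseteq> V" for V
  proof -
    have "T V = (\<Union>W\<in>{W\<in>\<W>. X closure_of W \<subseteq> V}. X closure_of W)"
      unfolding T_def
      by (rule closure_of_locally_finite_Union, rule locally_finite_in_subset[OF lf]) auto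
    then show ?thesis
      by auto
  qed
  moreover have "\<exists>V\<in>\<V>. x \<in> T V" if x: "x \<in> topspace X" for x
  proof -
    obtain W where W: "W \<in> \<W>" "x \<in> W"
      using x W_cover by blast
    obtain N where N: "N \<in> \<N>" "W \<subseteq> N"
      using refines W(1) by blast
    obtain V where V: "V \<in> \<V>" "X closure_of N \<subseteq> V"
      using N(1) unfolding \<N>_def by blast
    have "X closure_of W \<subseteq> V"
      using closure_of_mono[OF N(2)] V(2) by (rule order_trans)
    then have "x \<in> \<Union>{W\<in>\<W>. X closure_of W \<subseteq> V}"
      using W by blast
    moreover have "\<Union>{W\<in>\<W>. X closure_of W \<subseteq> V} \<subseteq> topspace X"
      using W_cover by blast
    ultimately have "x \<in> T V"
      unfolding T_def using closure_of_subset by blast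
    then show ?thesis
      using V(1) by blast
  qed
  ultimately show ?thesis
    by (intro that[of T]) blast+
qed

lemma continuous_map_Min_finite:
  assumes "finite S" "\<And>V. V \<in> S \<Longrightarrow> continuous_map Y euclideanreal (F V)"
  shows "continuous_map Y euclideanreal (\<lambda>y. Min (insert (1::real) ((\<lambda>V. F V y) ` S)))"
  using assms
proof (induction S rule: finite_induct)
  case empty
  then show ?case
    by simp
next
  case (insert V S)
  have "Min (insert 1 ((\<lambda>V. F V y) ` insert V S)) = min (F V y) (Min (insert 1 ((\<lambda>V. F V y) ` S)))"
    for y
  proof -
    have "insert 1 ((\<lambda>V. F V y) ` insert V S) = insert (F V y) (insert 1 ((\<lambda>V. F V y) ` S))"
      by auto
    then show ?thesis
      using insert.hyps(1) by simp
  qed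
  then show ?case
    using insert by (simp add: continuous_map_real_min)
qed

(* For a locally finite family of sets V with continuous functions F V that equal 1 off V,
   the pointwise minimum over the members containing the point is continuous: near every
   point it agrees with a minimum of finitely many of the F V. *)
lemma continuous_map_locally_finite_Min:
  assumes lf: "locally_finite_in Y \<V>"
    and cont: "\<And>V. V \<in> \<V> \<Longrightarrow> continuous_map Y euclideanreal (F V)"
    and one_outside: "\<And>V y. \<lbrakk>V \<in> \<V>; y \<in> topspace Y; y \<notin> V\<rbrakk> \<Longrightarrow> F V y = 1"
  shows "continuous_map Y euclideanreal (\<lambda>y. Min (insert 1 ((\<lambda>V. F V y) ` {V\<in>\<V>. y \<in> V})))"
proof -
  define e where "e = (\<lambda>y. Min (insert 1 ((\<lambda>V. F V y) ` {V\<in>\<V>. y \<in> V})))"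
  have "\<forall>y\<in>topspace Y. \<exists>N. openin Y N \<and> y \<in> N \<and> finite {V\<in>\<V>. V \<inter> N \<noteq> {}}"
    using lf unfolding locally_finite_in_def by (rule conjunct2)
  then have "\<exists>N. \<forall>y\<in>topspace Y. openin Y (N y) \<and> y \<in> N y \<and> finite {V\<in>\<V>. V \<inter> N y \<noteq> {}}"
    by (rule bchoice)
  then obtain N where "\<forall>y\<in>topspace Y. openin Y (N y) \<and> y \<in> N y \<and> finite {V\<in>\<V>. V \<inter> N y \<noteq> {}}"
    by blast
  then have N_open: "\<And>y. y \<in> topspace Y \<Longrightarrow> openin Y (N y)"
    and N_mem: "\<And>y. y \<in> topspace Y \<Longrightarrow> y \<in> N y"
    and N_fin: "\<And>y. y \<in> topspace Y \<Longrightarrow> finite {V\<in>\<V>. V \<inter> N y \<noteq> {}}"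
    by blast+
  define eN where "eN y z = Min (insert 1 ((\<lambda>V. F V z) ` {V\<in>\<V>. V \<inter> N y \<noteq> {}}))" for y z
  have local_eq: "e z = eN y z" if "y \<in> topspace Y" "z \<in> N y" for y z
  proof -
    have z: "z \<in> topspace Y"
      using that N_open openin_subset by blast
    have "{V\<in>\<V>. z \<in> V} \<subseteq> {V\<in>\<V>. V \<inter> N y \<noteq> {}}"
      using that by blast
    moreover have "F V z = 1" if "V \<in> \<V>" "z \<notin> V" for V
      using one_outside that z by blast
    ultimately have "insert 1 ((\<lambda>V. F V z) ` {V\<in>\<V>. z \<in> V})
             = insert 1 ((\<lambda>V. F V z) ` {V\<in>\<V>. V \<inter> N y \<noteq> {}})"
      by blast
    then show ?thesis
      by (simp add: e_def eN_def)
  qed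
  show ?thesis
    unfolding e_def[symmetric]
  proof (rule pasting_lemma[where I = "topspace Y" and T = N and f = eN])
    show "continuous_map (subtopology Y (N y)) euclideanreal (eN y)" if "y \<in> topspace Y" for y
      unfolding eN_def
      by (rule continuous_map_from_subtopology, rule continuous_map_Min_finite)
         (use that N_fin cont in auto)
    show "eN i x = eN j x" if "i \<in> topspace Y" "j \<in> topspace Y" "x \<in> topspace Y \<inter> N i \<inter> N j"
      for i j x
      using that local_eq[of i x] local_eq[of j x] by simp
    show "\<exists>j. j \<in> topspace Y \<and> x \<in> N j \<and> e x = eN j x" if "x \<in> topspace Y" for x
      using that N_mem[OF that] local_eq[OF that N_mem[OF that]] by blast
  qed (rule N_open)
qed

lemma locally_finite_in_point_finite:
  assumes lf: "locally_finite_in Y \<V>" and y: "y \<in> topspace Y"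
  shows "finite {V\<in>\<V>. y \<in> V}"
proof -
  have "\<forall>x\<in>topspace Y. \<exists>N. openin Y N \<and> x \<in> N \<and> finite {V\<in>\<V>. V \<inter> N \<noteq> {}}"
    using lf unfolding locally_finite_in_def by (rule conjunct2)
  then obtain N where N: "y \<in> N" "finite {V\<in>\<V>. V \<inter> N \<noteq> {}}"
    using y by blast
  show ?thesis
    by (rule rev_finite_subset[OF N(2)]) (use N(1) in blast)
qed

lemma normal_space_Urysohn_family:
  assumes N: "normal_space Y"
    and T_closed: "\<And>V. V \<in> \<V> \<Longrightarrow> closedin Y (T V)" and V_open: "\<And>V. V \<in> \<V> \<Longrightarrow> openin Y V"
    and T_sub: "\<And>V. V \<in> \<V> \<Longrightarrow> T V \<subseteq> V" and d_le: "\<And>V. V \<in> \<V> \<Longrightarrow> d V \<le> (1::real)"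
  obtains F where "\<forall>V\<in>\<V>. continuous_map Y (top_of_set {d V..1}) (F V) \<and>
      F V ` T V \<subseteq> {d V} \<and> F V ` (topspace Y - V) \<subseteq> {1}"
proof -
  have "\<exists>F. continuous_map Y (top_of_set {d V..1}) F \<and> F ` T V \<subseteq> {d V} \<and> F ` (topspace Y - V) \<subseteq> {1}"
    if V: "V \<in> \<V>" for V
  proof -
    have "closedin Y (topspace Y - V)"
      using V_open[OF V] by (simp add: closedin_diff)
    moreover have "disjnt (T V) (topspace Y - V)"
      using T_sub[OF V] by (auto simp: disjnt_def)
    ultimately obtain F where "continuous_map Y (top_of_set {d V..1}) F" "F ` T V \<subseteq> {d V}"
        "F ` (topspace Y - V) \<subseteq> {1}"
      using Urysohn_lemma[OF N T_closed[OF V] _ _ d_le[OF V]] by blast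
    then show ?thesis
      by blast
  qed
  then have "\<exists>F. \<forall>V\<in>\<V>. continuous_map Y (top_of_set {d V..1}) (F V) \<and>
      F V ` T V \<subseteq> {d V} \<and> F V ` (topspace Y - V) \<subseteq> {1}"
    by (intro bchoice ballI)
  then obtain F where "\<forall>V\<in>\<V>. continuous_map Y (top_of_set {d V..1}) (F V) \<and>
      F V ` T V \<subseteq> {d V} \<and> F V ` (topspace Y - V) \<subseteq> {1}"
    by blast
  then show ?thesis
    by (rule that)
qed

(* Positive functions subordinate to an open cover: if every member G i of an open cover of a
   paracompact space carries a positive bound c i, there is a continuous e : Y \<rightarrow> (0,1] such
   that every point lies in some G i with e \<le> c i there.  Take a locally finite refinement V,
   each V inside some G (idx V), a closed shrinking T V \<subseteq> V, Urysohn functions equal to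
   d V = min 1 (c (idx V)) on T V and to 1 off V, and their locally finite minimum. *)
lemma paracompact_space_subordinate_function:
  assumes P: "paracompact_space Y"
    and G_open: "\<And>i. i \<in> I \<Longrightarrow> openin Y (G i)" and G_cover: "topspace Y \<subseteq> (\<Union>i\<in>I. G i)"
    and c_pos: "\<And>i. i \<in> I \<Longrightarrow> 0 < c i"
  obtains e where "continuous_map Y euclideanreal e"
    "\<forall>y\<in>topspace Y. 0 < e y \<and> e y \<le> 1 \<and> (\<exists>i\<in>I. y \<in> G i \<and> e y \<le> c i)"
proof -
  have GI_open: "\<And>U. U \<in> G ` I \<Longrightarrow> openin Y U"
    using G_open by blast
  have GI_cover: "\<Union>(G ` I) = topspace Y"
    using G_cover by (auto dest: openin_subset[OF G_open])
  obtain \<V> where V_open: "\<forall>V\<in>\<V>. openin Y V" and V_cover: "\<Union>\<V> = topspace Y"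
    and lf: "locally_finite_in Y \<V>" and refines: "\<forall>V\<in>\<V>. \<exists>U\<in>G ` I. V \<subseteq> U"
    by (rule paracompact_space_refinement[OF P GI_open GI_cover])
  have "\<forall>V\<in>\<V>. \<exists>i. i \<in> I \<and> V \<subseteq> G i"
    using refines by blast
  then have "\<exists>idx. \<forall>V\<in>\<V>. idx V \<in> I \<and> V \<subseteq> G (idx V)"
    by (rule bchoice)
  then obtain idx where idx: "\<forall>V\<in>\<V>. idx V \<in> I \<and> V \<subseteq> G (idx V)"
    by blast
  define d where "d V = min 1 (c (idx V))" for V
  have V_open': "\<And>V. V \<in> \<V> \<Longrightarrow> openin Y V"
    using V_open by blast
  obtain T where T: "\<forall>V. closedin Y (T V) \<and> T V \<subseteq> V" and T_cover: "\<forall>y\<in>topspace Y. \<exists>V\<in>\<V>. y \<in> T V"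
    by (rule paracompact_closed_shrinking[OF P V_open' V_cover])
  have T_closed: "\<And>V. V \<in> \<V> \<Longrightarrow> closedin Y (T V)" and T_sub: "\<And>V. V \<in> \<V> \<Longrightarrow> T V \<subseteq> V"
    using T by blast+
  have d_le: "\<And>V. V \<in> \<V> \<Longrightarrow> d V \<le> 1"
    by (simp add: d_def)
  obtain F where F: "\<forall>V\<in>\<V>. continuous_map Y (top_of_set {d V..1}) (F V) \<and>
      F V ` T V \<subseteq> {d V} \<and> F V ` (topspace Y - V) \<subseteq> {1}"
    by (rule normal_space_Urysohn_family[OF paracompact_imp_normal_space[OF P] T_closed V_open' T_sub d_le])
  have F_pos: "0 < F V y" if V: "V \<in> \<V>" and y: "y \<in> topspace Y" for V y
  proof -
    have "F V y \<in> {d V..1}"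
      using F V y unfolding continuous_map_in_subtopology by (auto simp: Pi_iff)
    moreover have "0 < d V"
      using c_pos idx V by (simp add: d_def)
    ultimately show ?thesis
      by simp
  qed
  define e where "e y = Min (insert 1 ((\<lambda>V. F V y) ` {V\<in>\<V>. y \<in> V}))" for y
  have "continuous_map Y euclideanreal e"
    unfolding e_def[abs_def]
    by (rule continuous_map_locally_finite_Min[OF lf])
       (use F continuous_map_into_fulltopology in blast)+
  moreover have "0 < e y \<and> e y \<le> 1 \<and> (\<exists>i\<in>I. y \<in> G i \<and> e y \<le> c i)" if y: "y \<in> topspace Y" for y
  proof -
    note fin = locally_finite_in_point_finite[OF lf y]
    have "0 < e y" "e y \<le> 1"
      unfolding e_def using fin F_pos[OF _ y] by simp_all
    obtain V where V: "V \<in> \<V>" "y \<in> T V"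
      using T_cover y by blast
    then have "y \<in> V"
      using T_sub by blast
    then have "e y \<le> F V y"
      unfolding e_def using fin V(1) by simp
    also have "\<dots> = d V"
      using F V by blast
    also have "\<dots> \<le> c (idx V)"
      by (simp add: d_def)
    finally show ?thesis
      using \<open>0 < e y\<close> \<open>e y \<le> 1\<close> idx V(1) \<open>y \<in> V\<close> by blast
  qed
  ultimately show ?thesis
    by (intro that) blast+
qed

(* The margin is the
   least distance from A to the closed set Z - W, attained since A is compact. *)
lemma compact_closed_uniform_margin:
  fixes A Z W :: "'m::metric_space set"
  assumes A: "compact A" and Z: "closed Z" and W: "open W" and sub: "A \<inter> Z \<subseteq> W"
  obtains \<delta> where "\<delta> > 0" "\<And>a z. \<lbrakk>a \<in> A; z \<in> Z; dist z a < \<delta>\<rbrakk> \<Longrightarrow> z \<in> W"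
proof (cases "A = {} \<or> Z - W = {}")
  case True
  then show ?thesis
    by (intro that[of 1]) auto
next
  case False
  then have "A \<noteq> {}" "Z - W \<noteq> {}"
    by auto
  have closed_rest: "closed (Z - W)"
    using Z W by (simp add: closed_Diff)
  obtain a0 where a0: "a0 \<in> A" and least: "\<And>a. a \<in> A \<Longrightarrow> infdist a0 (Z - W) \<le> infdist a (Z - W)"
    using continuous_attains_inf[OF A \<open>A \<noteq> {}\<close> continuous_on_infdist[OF continuous_on_id]] by blast
  have "a0 \<notin> Z - W"
    using a0 sub by blast
  then have pos: "0 < infdist a0 (Z - W)"
    using infdist_pos_not_in_closed[OF closed_rest \<open>Z - W \<noteq> {}\<close>] by blast
  have inside: "z \<in> W" if a: "a \<in> A" and z: "z \<in> Z" and close: "dist z a < infdist a0 (Z - W)" for a z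
  proof (rule ccontr)
    assume "z \<notin> W"
    then have "infdist a (Z - W) \<le> dist a z"
      using z by (intro infdist_le) blast
    also have "\<dots> < infdist a0 (Z - W)"
      using close by (simp add: dist_commute)
    also have "\<dots> \<le> infdist a (Z - W)"
      using least[OF a] .
    finally show False
      by simp
  qed
  show ?thesis
    by (rule that[OF pos inside])
qed

definition small_order_coverable :: "nat \<Rightarrow> nat \<Rightarrow> 'm::metric_space set \<Rightarrow> bool" where
  "small_order_coverable n k S \<longleftrightarrow> (\<exists>\<U>. (\<forall>U\<in>\<U>. open U) \<and> S \<subseteq> \<Union>\<U> \<and>
     (\<forall>U\<in>\<U>. \<forall>a\<in>U. \<forall>b\<in>U. dist a b \<le> 1 / real k) \<and> order_le UNIV \<U> n)"

lemma R_set_iff: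
  "g \<in> R_set X f n H Z k \<longleftrightarrow> continuous_map X euclidean g \<and>
     (\<forall>y\<in>H. small_order_coverable n k (g ` {x \<in> topspace X. f x = y} \<inter> Z))"
  by (simp add: R_set_def small_order_coverable_def)

(* The same cover works: g maps the fibres over G into the
   \<delta>-neighbourhood of the compact set g(f^-1(y)), because f is closed; then h maps them into the
   2\<delta>-neighbourhood, which meets Z inside the cover by the uniform margin lemma. *)
lemma small_order_coverable_stable:
  fixes g :: "'a \<Rightarrow> 'm::metric_space"
  assumes proper: "proper_map X Y f" and g: "continuous_map X euclidean g" and Z: "closed Z"
    and y: "y \<in> topspace Y"
    and cov: "small_order_coverable n k (g ` {x \<in> topspace X. f x = y} \<inter> Z)"
  obtains \<delta> G where "\<delta> > 0" "openin Y G" "y \<in> G"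
    "\<forall>h y'. y' \<in> G \<and> (\<forall>x\<in>topspace X. f x = y' \<longrightarrow> dist (h x) (g x) < \<delta>)
       \<longrightarrow> small_order_coverable n k (h ` {x \<in> topspace X. f x = y'} \<inter> Z)"
proof -
  define A where "A = g ` {x \<in> topspace X. f x = y}"
  have "compactin X {x \<in> topspace X. f x = y}"
    using proper y unfolding proper_map_def by blast
  then have "compact A"
    using image_compactin[OF _ g] unfolding A_def by (simp add: compactin_euclidean_iff)
  obtain \<U> where U_open: "\<forall>U\<in>\<U>. open U" and U_cover: "A \<inter> Z \<subseteq> \<Union>\<U>"
    and U_small: "(\<forall>U\<in>\<U>. \<forall>a\<in>U. \<forall>b\<in>U. dist a b \<le> 1 / real k) \<and> order_le UNIV \<U> n"
    using cov unfolding small_order_coverable_def A_def by blast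
  obtain \<rho> where "\<rho> > 0" and margin: "\<And>a z. \<lbrakk>a \<in> A; z \<in> Z; dist z a < \<rho>\<rbrakk> \<Longrightarrow> z \<in> \<Union>\<U>"
    using compact_closed_uniform_margin[OF \<open>compact A\<close> Z _ U_cover] U_open by blast
  define V where "V = {x \<in> topspace X. g x \<in> (\<Union>a\<in>A. ball a (\<rho> / 2))}"
  define G where "G = topspace Y - f ` (topspace X - V)"
  have "openin X V"
    unfolding V_def by (rule openin_continuous_map_preimage[OF g]) auto
  then have "closedin Y (f ` (topspace X - V))"
    using proper unfolding proper_map_def closed_map_def by (simp add: closedin_diff)
  then have G_open: "openin Y G"
    unfolding G_def by (simp add: openin_diff)
  have y_in: "y \<in> G"
    using y \<open>\<rho> > 0\<close> unfolding G_def V_def A_def by force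
  have stable: "\<forall>h y'. y' \<in> G \<and> (\<forall>x\<in>topspace X. f x = y' \<longrightarrow> dist (h x) (g x) < \<rho> / 2)
      \<longrightarrow> small_order_coverable n k (h ` {x \<in> topspace X. f x = y'} \<inter> Z)"
  proof (intro allI impI)
    fix h y' assume "y' \<in> G \<and> (\<forall>x\<in>topspace X. f x = y' \<longrightarrow> dist (h x) (g x) < \<rho> / 2)"
    then have y': "y' \<in> G" and h: "\<forall>x\<in>topspace X. f x = y' \<longrightarrow> dist (h x) (g x) < \<rho> / 2"
      by blast+
    have "h x \<in> \<Union>\<U>" if x: "x \<in> topspace X" "f x = y'" and hZ: "h x \<in> Z" for x
    proof -
      have "x \<in> V"
        using x y' unfolding G_def by blast
      then obtain a where a: "a \<in> A" "dist a (g x) < \<rho> / 2"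
        unfolding V_def by auto
      have "dist (h x) a \<le> dist (h x) (g x) + dist a (g x)"
        by (rule dist_triangle2)
      also have "\<dots> < \<rho>"
        using h x a(2) by fastforce
      finally show ?thesis
        using margin[OF a(1) hZ] by blast
    qed
    then show "small_order_coverable n k (h ` {x \<in> topspace X. f x = y'} \<inter> Z)"
      unfolding small_order_coverable_def using U_open U_small by blast
  qed
  have "0 < \<rho> / 2"
    using \<open>\<rho> > 0\<close> by simp
  then show ?thesis
    by (rule that[OF _ G_open y_in stable])
qed

(* Around g \<in> R_n^f(H,Z,k), the local margins \<delta>_y on
   the neighbourhoods G_y (y \<in> H) from the stability lemma, together with the bound 1 on the
   open set Y - H, form an open cover of Y with positive bounds; a subordinate function e on Y
   is then a radius that works simultaneously over every point of H. *)
lemma R_set_uniform_radius: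
  fixes g :: "'a \<Rightarrow> 'm::metric_space"
  assumes PY: "paracompact_space Y" and proper: "proper_map X Y f" and Z: "closed Z"
    and H: "closedin Y H" and g: "continuous_map X euclidean g"
    and cov: "\<forall>y\<in>H. small_order_coverable n k (g ` {x \<in> topspace X. f x = y} \<inter> Z)"
  obtains e where "continuous_map Y euclideanreal e" "\<forall>y\<in>topspace Y. 0 < e y \<and> e y \<le> 1"
    "\<forall>h. \<forall>y\<in>H. (\<forall>x\<in>topspace X. f x = y \<longrightarrow> dist (h x) (g x) < e y)
       \<longrightarrow> small_order_coverable n k (h ` {x \<in> topspace X. f x = y} \<inter> Z)"
proof -
  have HY: "H \<subseteq> topspace Y"
    using H by (rule closedin_subset)
  define stable_near where "stable_near y \<delta> G \<longleftrightarrow> \<delta> > 0 \<and> openin Y G \<and> y \<in> G \<and>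
      (\<forall>h y'. y' \<in> G \<and> (\<forall>x\<in>topspace X. f x = y' \<longrightarrow> dist (h x) (g x) < \<delta>)
         \<longrightarrow> small_order_coverable n k (h ` {x \<in> topspace X. f x = y'} \<inter> Z))" for y \<delta> G
  have "\<forall>y\<in>H. \<exists>\<delta> G. stable_near y \<delta> G"
  proof
    fix y assume "y \<in> H"
    then have "y \<in> topspace Y" "small_order_coverable n k (g ` {x \<in> topspace X. f x = y} \<inter> Z)"
      using HY cov by blast+
    then obtain \<delta> G where "\<delta> > 0" "openin Y G" "y \<in> G"
      "\<forall>h y'. y' \<in> G \<and> (\<forall>x\<in>topspace X. f x = y' \<longrightarrow> dist (h x) (g x) < \<delta>)
         \<longrightarrow> small_order_coverable n k (h ` {x \<in> topspace X. f x = y'} \<inter> Z)"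
      by (rule small_order_coverable_stable[OF proper g Z])
    then show "\<exists>\<delta> G. stable_near y \<delta> G"
      unfolding stable_near_def by blast
  qed
  then have "\<exists>\<delta>. \<forall>y\<in>H. \<exists>G. stable_near y (\<delta> y) G"
    by (rule bchoice)
  then obtain \<delta> where "\<forall>y\<in>H. \<exists>G. stable_near y (\<delta> y) G"
    by blast
  then have "\<exists>G. \<forall>y\<in>H. stable_near y (\<delta> y) (G y)"
    by (rule bchoice)
  then obtain G where stable: "\<forall>y\<in>H. stable_near y (\<delta> y) (G y)"
    by blast
  define Gi where "Gi y = (if y \<in> H then G y else topspace Y - H)" for y
  define ci where "ci y = (if y \<in> H then \<delta> y else 1)" for y
  have Gi_open: "openin Y (Gi i)" if "i \<in> topspace Y" for i
    using stable H unfolding Gi_def stable_near_def by (auto simp: openin_diff)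
  have Gi_cover: "topspace Y \<subseteq> (\<Union>i\<in>topspace Y. Gi i)"
    using stable HY unfolding Gi_def stable_near_def by fastforce
  have ci_pos: "0 < ci i" if "i \<in> topspace Y" for i
    using stable unfolding ci_def stable_near_def by auto
  obtain e where e_cont: "continuous_map Y euclideanreal e"
    and e_props: "\<forall>y\<in>topspace Y. 0 < e y \<and> e y \<le> 1 \<and> (\<exists>i\<in>topspace Y. y \<in> Gi i \<and> e y \<le> ci i)"
    by (rule paracompact_space_subordinate_function[OF PY Gi_open Gi_cover ci_pos])
  have "small_order_coverable n k (h ` {x \<in> topspace X. f x = y} \<inter> Z)"
    if y: "y \<in> H" and close: "\<forall>x\<in>topspace X. f x = y \<longrightarrow> dist (h x) (g x) < e y" for h y
  proof -
    obtain i where i: "i \<in> topspace Y" "y \<in> Gi i" "e y \<le> ci i"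
      using e_props y HY by blast
    then have "i \<in> H"
      using y unfolding Gi_def by (auto split: if_splits)
    then have "y \<in> G i" "e y \<le> \<delta> i"
      using i unfolding Gi_def ci_def by auto
    then have "\<forall>x\<in>topspace X. f x = y \<longrightarrow> dist (h x) (g x) < \<delta> i"
      using close by fastforce
    then show ?thesis
      using stable \<open>i \<in> H\<close> \<open>y \<in> G i\<close> unfolding stable_near_def by blast
  qed
  then show ?thesis
    using e_cont e_props by (intro that) blast+
qed

lemma sl_open_R_set:
  fixes Z :: "'m::metric_space set"
  assumes PY: "paracompact_space Y" and f: "perfect_map X Y f" and Z: "closed Z"
    and H: "closedin Y H"
  shows "sl_open X (R_set X f n H Z k)"
  unfolding sl_open_def
proof (intro conjI ballI)
  show "R_set X f n H Z k \<subseteq> {g. continuous_map X euclidean g}"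
    by (auto simp: R_set_iff)
  fix g assume "g \<in> R_set X f n H Z k"
  then have g: "continuous_map X euclidean g"
    and cov: "\<forall>y\<in>H. small_order_coverable n k (g ` {x \<in> topspace X. f x = y} \<inter> Z)"
    by (simp_all add: R_set_iff)
  have f_cont: "continuous_map X Y f" and proper: "proper_map X Y f"
    using f by (simp_all add: perfect_map_def)
  obtain e where e_cont: "continuous_map Y euclideanreal e"
    and e_range: "\<forall>y\<in>topspace Y. 0 < e y \<and> e y \<le> 1"
    and e_radius: "\<forall>h. \<forall>y\<in>H. (\<forall>x\<in>topspace X. f x = y \<longrightarrow> dist (h x) (g x) < e y)
       \<longrightarrow> small_order_coverable n k (h ` {x \<in> topspace X. f x = y} \<inter> Z)"
    by (rule R_set_uniform_radius[OF PY proper Z H g cov])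
  show "\<exists>\<epsilon>. continuous_map X euclidean \<epsilon> \<and> (\<forall>x\<in>topspace X. 0 < \<epsilon> x \<and> \<epsilon> x \<le> (1::real)) \<and>
      {h. continuous_map X euclidean h \<and> (\<forall>x\<in>topspace X. dist (h x) (g x) < \<epsilon> x)}
        \<subseteq> R_set X f n H Z k"
  proof (intro exI conjI)
    show "continuous_map X euclidean (e \<circ> f)"
      using f_cont e_cont by (rule continuous_map_compose)
    show "\<forall>x\<in>topspace X. 0 < (e \<circ> f) x \<and> (e \<circ> f) x \<le> 1"
      using e_range f_cont continuous_map_image_subset_topspace by fastforce
    show "{h. continuous_map X euclidean h \<and> (\<forall>x\<in>topspace X. dist (h x) (g x) < (e \<circ> f) x)}
        \<subseteq> R_set X f n H Z k"
    proof (clarsimp simp: R_set_iff)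
      fix h y assume "continuous_map X euclidean h"
        and "\<forall>x\<in>topspace X. dist (h x) (g x) < e (f x)" and "y \<in> H"
      then have "\<forall>x\<in>topspace X. f x = y \<longrightarrow> dist (h x) (g x) < e y"
        by auto
      then show "small_order_coverable n k (h ` {x \<in> topspace X. f x = y} \<inter> Z)"
        using e_radius \<open>y \<in> H\<close> by blast
    qed
  qed
qed

(* Both cases of the theorem are instances of the general openness result. *)
theorem lemma2p3:
  fixes X :: "'a topology" and Y :: "'b topology" and f :: "'a \<Rightarrow> 'b"
    and Z :: "'m::{metric_space,complete_space} set" and H :: "'b set" and n k :: nat
  assumes "paracompact_space X" and "paracompact_space Y"
    and "perfect_map X Y f" and "map_dim_le X Y f n"
    and "closed Z"
    and "closedin Y H" and "k \<ge> 1"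
  shows "(metrizable_space X \<and> metrizable_space Y \<longrightarrow> sl_open X (R_set X f n H Z k))
       \<and> (Z = UNIV \<longrightarrow> sl_open X (R_set X f n H Z k))"
proof -
  have "sl_open X (R_set X f n H Z k)"
    using assms(2,3,5,6) by (rule sl_open_R_set)
  then show ?thesis
    by blast
qed

end
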